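(* Let $\Omega=\{1,\dots,n\}$, $u,w\in\mathbb{R}^n_{+}\setminus\{0\}$ and $p>1$. Define $f:2^{\Omega}\to\mathbb{R}$ by $f(\mathcal{S})=\sum_{s\in\mathcal{S}}u_s+\left(\sum_{s\in\mathcal{S}}w_s\right)^p$. Then $D[f]\le p\|w\|_1^{p-1}\|w\|_\infty$.
   Context: $D[f]=\max\{f(\mathcal{A}\cup\mathcal{B}\cup\{s\})-f(\mathcal{A}\cup\mathcal{B})-f(\mathcal{A}\cup\{s\})+f(\mathcal{A}):\mathcal{A},\mathcal{B}\subseteq\Omega,s\in\Omega,|\mathcal{A}|\le|\Omega|-1\}$. *)

theory Defs
  imports "HOL-Analysis.Analysis"
begin

definition Dmax :: "'a set \<Rightarrow> ('a set \<Rightarrow> real) \<Rightarrow> real" where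
  "Dmax \<Omega> f = Max {f (A \<union> B \<union> {s}) - f (A \<union> B) - f (A \<union> {s}) + f A
      | A B s. A \<subseteq> \<Omega> \<and> B \<subseteq> \<Omega> \<and> s \<in> \<Omega> \<and> card A \<le> card \<Omega> - 1}"

end

theory Submission
  imports Defs
begin

(* The linear part sum u of f is modular, so its second differences are -u s or 0, hence
   nonpositive. In the power part, with X = A \<union> B and w(S) = sum w S, the increment
   w(A \<union> {s})^p - w(A)^p is nonnegative and may be dropped, while by convexity of t^p
   w(X \<union> {s})^p - w(X)^p <= p w(X \<union> {s})^(p-1) (w(X \<union> {s}) - w(X)) <= p |w|_1^(p-1) |w|_inf. *)

lemma powr_diff_le_tangent:
  fixes x y p :: real
  assumes "0 \<le> y" "y \<le> x" "p \<ge> 1"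
  shows "x powr p - y powr p \<le> p * x powr (p - 1) * (x - y)"
proof (cases "y = 0")
  case True
  have "x powr p = x powr (p - 1) * x"
    using assms powr_add[of x "p - 1" 1] by (cases "x = 0") auto
  moreover have "x powr p \<le> p * x powr p"
    using assms(3) by (simp add: mult_le_cancel_right1)
  ultimately show ?thesis
    using True by (simp add: mult.assoc)
next
  case False
  with assms have pos: "0 < y" "0 < x" by auto
  have "((\<lambda>z. z powr p) has_field_derivative p * x powr (p - 1)) (at x within {0<..})"
    using has_real_derivative_powr[OF pos(2)] by (rule DERIV_subset) auto
  then have "y powr p - x powr p \<ge> p * x powr (p - 1) * (y - x)"
    by (intro convex_on_imp_above_tangent[OF powr_convex[OF assms(3)]])
       (use pos in \<open>auto simp: interior_open\<close>)
  then show ?thesis by (simp add: algebra_simps)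
qed

lemma sum_insert_diff_antimono:
  fixes u :: "'a \<Rightarrow> real"
  assumes "finite X" "A \<subseteq> X" "0 \<le> u s"
  shows "sum u (insert s X) - sum u X \<le> sum u (insert s A) - sum u A"
proof -
  have "finite A" using assms(1,2) by (rule finite_subset[rotated])
  then show ?thesis
    using assms by (auto simp: sum.insert_if)
qed

lemma powr_sum_insert_diff_le:
  fixes w :: "'a \<Rightarrow> real"
  assumes "finite \<Omega>" "X \<subseteq> \<Omega>" "s \<in> \<Omega>" "\<forall>i\<in>\<Omega>. 0 \<le> w i" "p \<ge> 1"
  shows "sum w (insert s X) powr p - sum w X powr p \<le> p * sum w \<Omega> powr (p - 1) * w s"
proof -
  define a b where "a = sum w X" and "b = sum w (insert s X)"
  have "finite X" using assms(1,2) by (rule finite_subset[rotated])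
  have "0 \<le> a" unfolding a_def using assms(2,4) by (intro sum_nonneg) auto
  moreover have "b - a \<le> w s" "0 \<le> b - a"
    unfolding a_def b_def using \<open>finite X\<close> assms(3,4) by (auto simp: sum.insert_if)
  moreover have "b \<le> sum w \<Omega>"
    unfolding b_def using assms by (intro sum_mono2) auto
  ultimately have slope_bound: "b powr (p - 1) * (b - a) \<le> sum w \<Omega> powr (p - 1) * w s"
    using assms(5) by (intro mult_mono powr_mono2) auto
  have "b powr p - a powr p \<le> p * b powr (p - 1) * (b - a)"
    using \<open>0 \<le> a\<close> \<open>0 \<le> b - a\<close> assms(5) by (intro powr_diff_le_tangent) auto
  also have "\<dots> \<le> p * sum w \<Omega> powr (p - 1) * w s"
    using slope_bound assms(5) by (simp add: mult.assoc mult_left_mono)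
  finally show ?thesis
    unfolding a_def b_def .
qed

lemma modular_plus_powr_second_difference_le:
  fixes u w :: "'a \<Rightarrow> real" and p :: real
  defines "f \<equiv> \<lambda>S. sum u S + sum w S powr p"
  assumes "finite \<Omega>" "\<forall>i\<in>\<Omega>. 0 \<le> u i" "\<forall>i\<in>\<Omega>. 0 \<le> w i" "p \<ge> 1"
    and "A \<subseteq> \<Omega>" "B \<subseteq> \<Omega>" "s \<in> \<Omega>"
  shows "f (A \<union> B \<union> {s}) - f (A \<union> B) - f (A \<union> {s}) + f A
    \<le> p * sum w \<Omega> powr (p - 1) * (MAX i\<in>\<Omega>. w i)"
proof -
  have fin: "finite (A \<union> B)" "finite A"
    using assms(2,6,7) by (auto intro: finite_subset)
  have "sum u (insert s (A \<union> B)) - sum u (A \<union> B) \<le> sum u (insert s A) - sum u A"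
    using assms(3,8) fin by (intro sum_insert_diff_antimono) auto
  moreover have "sum w A powr p \<le> sum w (insert s A) powr p"
    using assms(4,5,6,8) fin by (intro powr_mono2 sum_nonneg sum_mono2) auto
  moreover have "sum w (insert s (A \<union> B)) powr p - sum w (A \<union> B) powr p
      \<le> p * sum w \<Omega> powr (p - 1) * w s"
    using assms by (intro powr_sum_insert_diff_le) auto
  moreover have "p * sum w \<Omega> powr (p - 1) * w s \<le> p * sum w \<Omega> powr (p - 1) * (MAX i\<in>\<Omega>. w i)"
    using assms(2,5,8) by (intro mult_left_mono Max_ge) auto
  ultimately show ?thesis
    unfolding f_def by simp
qed

lemma Dmax_le:
  assumes "finite \<Omega>" "\<Omega> \<noteq> {}"
    and "\<And>A B s. A \<subseteq> \<Omega> \<Longrightarrow> B \<subseteq> \<Omega> \<Longrightarrow> s \<in> \<Omega> \<Longrightarrow>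
      f (A \<union> B \<union> {s}) - f (A \<union> B) - f (A \<union> {s}) + f A \<le> c"
  shows "Dmax \<Omega> f \<le> c"
proof -
  let ?D = "\<lambda>(A, B, s). f (A \<union> B \<union> {s}) - f (A \<union> B) - f (A \<union> {s}) + f A"
  let ?S = "{f (A \<union> B \<union> {s}) - f (A \<union> B) - f (A \<union> {s}) + f A
      | A B s. A \<subseteq> \<Omega> \<and> B \<subseteq> \<Omega> \<and> s \<in> \<Omega> \<and> card A \<le> card \<Omega> - 1}"
  have "?S \<subseteq> ?D ` (Pow \<Omega> \<times> Pow \<Omega> \<times> \<Omega>)"
    by (auto simp: image_iff) blast
  then have "finite ?S"
    by (rule finite_subset) (simp add: assms(1))
  moreover obtain s where "s \<in> \<Omega>" using assms(2) by blast
  then have "?S \<noteq> {}" by auto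
  ultimately show ?thesis
    unfolding Dmax_def using assms(3) by (auto simp: Max_le_iff)
qed

theorem mainTheorem16:
  fixes n :: nat and u w :: "nat \<Rightarrow> real" and p :: real
  assumes u_nonneg: "\<forall>i\<in>{1..n}. u i \<ge> 0"
    and w_nonneg: "\<forall>i\<in>{1..n}. w i \<ge> 0"
    and u_nonzero: "\<exists>i\<in>{1..n}. u i \<noteq> 0"
    and w_nonzero: "\<exists>i\<in>{1..n}. w i \<noteq> 0"
    and p_gt: "p > 1"
  shows "Dmax {1..n} (\<lambda>S. (\<Sum>s\<in>S. u s) + (\<Sum>s\<in>S. w s) powr p)
           \<le> p * (\<Sum>i\<in>{1..n}. \<bar>w i\<bar>) powr (p - 1) * (MAX i\<in>{1..n}. \<bar>w i\<bar>)"
proof -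
  \<comment> \<open>Of the nonvanishing hypotheses only \<open>{1..n} \<noteq> {}\<close> is needed, and the bound on \<open>card A\<close> not at all.\<close>
  have "{1..n} \<noteq> {}" using w_nonzero by auto
  moreover have "(\<Sum>i\<in>{1..n}. \<bar>w i\<bar>) = sum w {1..n}"
    using w_nonneg by (intro sum.cong) auto
  moreover have "(MAX i\<in>{1..n}. \<bar>w i\<bar>) = (MAX i\<in>{1..n}. w i)"
    using w_nonneg by (intro arg_cong[where f = Max] image_cong) auto
  ultimately show ?thesis
    using u_nonneg w_nonneg p_gt
    by (auto intro!: Dmax_le modular_plus_powr_second_difference_le)
qed

end
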